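(* Let $c>\frac12$ and $\delta>0$ be fixed. Let $\ell\ge4$ and let $\ell_1,\ell_2,\ell_3,\ell_4$ be positive integers with $\ell_1+\ell_2+\ell_3+\ell_4=\ell$. For $\mathbf y_1,\dots,\mathbf y_{\ell-2}\in\mathbb R^n$ and $\varepsilon_1,\dots,\varepsilon_{\ell-2}\in\{1,-1\}$ put $$I_{\mathbf y}=V_n^{-2\ell c}\int_{\mathbb R^n}\int_{\mathbb R^n}f_{c,\delta}(\mathbf x_1)\prod_{i=1}^{\ell_1-1}f_{c,\delta}(\varepsilon_i\mathbf x_1+\mathbf y_i)\; f_{c,\delta}(\mathbf x_2)\prod_{i=\ell_1}^{\ell_1+\ell_2-2}f_{c,\delta}(\varepsilon_i\mathbf x_2+\mathbf y_i)$$ $$\times\prod_{i=\ell_1+\ell_2-1}^{\ell_1+\ell_2+\ell_3-2}f_{c,\delta}\big(\varepsilon_i(\mathbf x_1+\mathbf x_2)+\mathbf y_i\big)\prod_{i=\ell_1+\ell_2+\ell_3-1}^{\ell-2}f_{c,\delta}\big(\varepsilon_i(\mathbf x_1-\mathbf x_2)+\mathbf y_i\big)\,d\mathbf x_1\,d\mathbf x_2 .$$ Then there exist constants $K>0$ and $0<\rho<1$, depending only on $\ell,c,\delta$ (and not on $n$, the $\varepsilon_i$ or the $\mathbf y_i$), such that $I_{\mathbf y}\le K\rho^n$ for all $n\ge1$, all $\varepsilon_i\in\{\pm1\}$ and all $\mathbf y_i\in\mathbb R^n$.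
   Context: $V_n=\pi^{n/2}/\Gamma(\frac n2+1)$ is the volume of the unit ball in $\mathbb R^n$, $R_n(\delta)=(\delta/V_n)^{1/n}$, and $f_{c,\delta}:\mathbb R^n\to\mathbb R$ is $f_{c,\delta}(\mathbf x)=|\mathbf x|^{-2cn}$ if $|\mathbf x|>R_n(\delta)$ and $f_{c,\delta}(\mathbf x)=0$ otherwise. Empty products equal $1$. *)

theory Defs
  imports "HOL-Analysis.Analysis"
begin

text \<open>Vectors of R^n are represented as functions nat => real, only the
coordinates 0..n-1 being relevant; Lebesgue measure on R^n is the product
measure PiM {..<n} (\<lambda>_. lborel).\<close>

definition lebesgue_n :: "nat \<Rightarrow> (nat \<Rightarrow> real) measure" where
  "lebesgue_n n = PiM {..<n} (\<lambda>_. lborel)"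

definition norm_n :: "nat \<Rightarrow> (nat \<Rightarrow> real) \<Rightarrow> real" where
  "norm_n n x = sqrt (\<Sum>i<n. (x i)\<^sup>2)"

definition V :: "nat \<Rightarrow> real" where
  "V n = pi powr (real n / 2) / Gamma (real n / 2 + 1)"

definition R :: "nat \<Rightarrow> real \<Rightarrow> real" where
  "R n \<delta> = (\<delta> / V n) powr (1 / real n)"

definition f_cd :: "nat \<Rightarrow> real \<Rightarrow> real \<Rightarrow> (nat \<Rightarrow> real) \<Rightarrow> real" where
  "f_cd n c \<delta> x = (if norm_n n x > R n \<delta> then norm_n n x powr (- 2 * c * real n) else 0)"

definition vadd :: "(nat \<Rightarrow> real) \<Rightarrow> (nat \<Rightarrow> real) \<Rightarrow> nat \<Rightarrow> real" where
  "vadd x y = (\<lambda>i. x i + y i)"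

definition vsub :: "(nat \<Rightarrow> real) \<Rightarrow> (nat \<Rightarrow> real) \<Rightarrow> nat \<Rightarrow> real" where
  "vsub x y = (\<lambda>i. x i - y i)"

definition vscale :: "real \<Rightarrow> (nat \<Rightarrow> real) \<Rightarrow> nat \<Rightarrow> real" where
  "vscale a x = (\<lambda>i. a * x i)"

text \<open>The integral I_y (as a nonnegative Lebesgue integral; integrand is nonnegative).\<close>
definition I_y :: "nat \<Rightarrow> real \<Rightarrow> real \<Rightarrow> nat \<Rightarrow> nat \<Rightarrow> nat \<Rightarrow> nat \<Rightarrow> nat
    \<Rightarrow> (nat \<Rightarrow> real) \<Rightarrow> (nat \<Rightarrow> nat \<Rightarrow> real) \<Rightarrow> ennreal" where
  "I_y n c \<delta> l l1 l2 l3 l4 \<epsilon> y =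
     ennreal (V n powr (- 2 * real l * c)) *
     (\<integral>\<^sup>+ x1. \<integral>\<^sup>+ x2. ennreal (
        f_cd n c \<delta> x1
        * (\<Prod>i\<in>{1..l1 - 1}. f_cd n c \<delta> (vadd (vscale (\<epsilon> i) x1) (y i)))
        * f_cd n c \<delta> x2
        * (\<Prod>i\<in>{l1..l1 + l2 - 2}. f_cd n c \<delta> (vadd (vscale (\<epsilon> i) x2) (y i)))
        * (\<Prod>i\<in>{l1 + l2 - 1..l1 + l2 + l3 - 2}.
             f_cd n c \<delta> (vadd (vscale (\<epsilon> i) (vadd x1 x2)) (y i)))
        * (\<Prod>i\<in>{l1 + l2 + l3 - 1..l - 2}.
             f_cd n c \<delta> (vadd (vscale (\<epsilon> i) (vsub x1 x2)) (y i))))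
      \<partial>lebesgue_n n \<partial>lebesgue_n n)"

end

theory Submission
  imports Defs
begin

text \<open>
  Every factor of the integrand is at most \<open>M = R n \<delta> powr (-2cn) = (V n / \<delta>) powr (2c)\<close>.
  Bound all factors by \<open>M\<close> except the first one of the third and of the fourth group,
  which depend on \<open>x1 + x2\<close> and on \<open>x1 - x2\<close>. The change of variables
  \<open>(x1, x2) \<mapsto> (x1 + x2, x1 - x2)\<close> has Jacobian \<open>2^n\<close>, so the remaining double integral
  is \<open>2^-n (\<integral>f)^2\<close>; and splitting \<open>{|x| > R n \<delta>}\<close> into shells of dyadically growing
  volume gives \<open>\<integral>f \<le> 2\<delta> / (1 - 2 powr (1 - 2c)) * M\<close>. The normalisation
  \<open>V n powr (-2lc)\<close> cancels \<open>M^l = (V n / \<delta>) powr (2lc)\<close>, leaving a constant times \<open>2^-n\<close>.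
\<close>

lemma nn_integral_PiM_lborel_affine:
  fixes I :: "'i set" and a :: real
  assumes "finite I" "a \<noteq> 0" and "h \<in> borel_measurable (PiM I (\<lambda>_. lborel))"
  shows "(\<integral>\<^sup>+x. h (\<lambda>i\<in>I. a * x i + p i) \<partial>PiM I (\<lambda>_. lborel))
     = ennreal ((1 / \<bar>a\<bar>) ^ card I) * (\<integral>\<^sup>+x. h x \<partial>PiM I (\<lambda>_. lborel))"
  using assms(1,3)
proof (induction I arbitrary: h rule: finite_induct)
  case empty
  then show ?case by (simp add: PiM_empty nn_integral_count_space_finite)
next
  case (insert j I)
  interpret product_sigma_finite "\<lambda>_. lborel" by standard
  note [measurable] = insert.prems
  let ?g = "\<lambda>x. \<lambda>i\<in>I. a * x i + p i"
  define k where "k z = (\<integral>\<^sup>+s. h (z(j := s)) \<partial>lborel)" for z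
  have k_measurable[measurable]: "k \<in> borel_measurable (PiM I (\<lambda>_. lborel))"
    unfolding k_def by measurable
  have fibre: "(\<integral>\<^sup>+t. h (\<lambda>i\<in>insert j I. a * (x(j := t)) i + p i) \<partial>lborel)
      = ennreal (1 / \<bar>a\<bar>) * k (?g x)" for x
  proof -
    have shift: "(\<lambda>i\<in>insert j I. a * (x(j := t)) i + p i) = (?g x)(j := p j + a * t)" for t
      using insert.hyps(2) by (auto simp: fun_eq_iff)
    have "?g x \<in> space (PiM I (\<lambda>_. lborel))"
      by (simp add: space_PiM)
    then have "(\<lambda>s. h ((?g x)(j := s))) \<in> borel_measurable borel"
      using measurable_comp[OF measurable_component_update insert.prems, OF _ insert.hyps(2)]
      unfolding comp_def by simp
    then have "k (?g x) = ennreal \<bar>a\<bar> * (\<integral>\<^sup>+t. h ((?g x)(j := p j + a * t)) \<partial>lborel)"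
      unfolding k_def by (rule nn_integral_real_affine[OF _ assms(2)])
    moreover have "ennreal (1 / \<bar>a\<bar>) * ennreal \<bar>a\<bar> = 1"
      using assms(2) by (simp flip: ennreal_mult)
    ultimately show ?thesis
      unfolding shift by (simp add: mult.assoc[symmetric])
  qed
  have "(\<integral>\<^sup>+x. h (\<lambda>i\<in>insert j I. a * x i + p i) \<partial>PiM (insert j I) (\<lambda>_. lborel))
      = (\<integral>\<^sup>+x. \<integral>\<^sup>+t. h (\<lambda>i\<in>insert j I. a * (x(j := t)) i + p i) \<partial>lborel \<partial>PiM I (\<lambda>_. lborel))"
    by (rule product_nn_integral_insert) (use insert in auto)
  also have "\<dots> = (\<integral>\<^sup>+x. ennreal (1 / \<bar>a\<bar>) * k (?g x) \<partial>PiM I (\<lambda>_. lborel))"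
    by (simp only: fibre)
  also have "\<dots> = ennreal (1 / \<bar>a\<bar>) * (ennreal ((1 / \<bar>a\<bar>) ^ card I) * (\<integral>\<^sup>+x. k x \<partial>PiM I (\<lambda>_. lborel)))"
    by (simp add: nn_integral_cmult insert.IH[OF k_measurable])
  also have "(\<integral>\<^sup>+x. k x \<partial>PiM I (\<lambda>_. lborel)) = (\<integral>\<^sup>+x. h x \<partial>PiM (insert j I) (\<lambda>_. lborel))"
    unfolding k_def by (rule product_nn_integral_insert[symmetric]) (use insert in auto)
  finally show ?case
    using insert.hyps by (simp add: mult.assoc[symmetric] flip: ennreal_mult)
qed

lemma nn_integral_PiM_lborel_sum_diff:
  fixes I :: "'i set" and a b :: real
  assumes "finite I" "a \<noteq> 0" "b \<noteq> 0"
    and [measurable]: "F \<in> borel_measurable (PiM I (\<lambda>_. lborel))"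
      "G \<in> borel_measurable (PiM I (\<lambda>_. lborel))"
  shows "(\<integral>\<^sup>+x1. \<integral>\<^sup>+x2. F (\<lambda>i\<in>I. a * (x1 i + x2 i) + p i) * G (\<lambda>i\<in>I. b * (x1 i - x2 i) + q i)
            \<partial>PiM I (\<lambda>_. lborel) \<partial>PiM I (\<lambda>_. lborel))
       = ennreal ((1 / (2 * \<bar>a * b\<bar>)) ^ card I)
           * (\<integral>\<^sup>+x. F x \<partial>PiM I (\<lambda>_. lborel)) * (\<integral>\<^sup>+x. G x \<partial>PiM I (\<lambda>_. lborel))"
proof -
  let ?L = "PiM I (\<lambda>_. lborel) :: ('i \<Rightarrow> real) measure"
  interpret finite_product_sigma_finite "\<lambda>_. lborel" I
    by standard (use assms(1) in auto)
  have L_sigma_finite: "sigma_finite_measure ?L"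
    by (rule sigma_finite_measure_axioms)
  interpret pair_sigma_finite ?L ?L
    using L_sigma_finite by (intro pair_sigma_finite.intro)
  \<comment> \<open>substituting \<open>w = a (x1 + x2) + p\<close> turns \<open>b (x1 - x2) + q\<close> into an affine function of \<open>x1\<close>\<close>
  define H where "H x1 w = G (\<lambda>i\<in>I. (2 * b) * x1 i + (q i - b * (w i - p i) / a))" for x1 w
  have H_measurable[measurable]: "(\<lambda>(x1, w). H x1 w) \<in> borel_measurable (?L \<Otimes>\<^sub>M ?L)"
    unfolding H_def by measurable
  have inner: "(\<integral>\<^sup>+x2. F (\<lambda>i\<in>I. a * (x1 i + x2 i) + p i) * G (\<lambda>i\<in>I. b * (x1 i - x2 i) + q i) \<partial>?L)
      = ennreal ((1 / \<bar>a\<bar>) ^ card I) * (\<integral>\<^sup>+w. F w * H x1 w \<partial>?L)" for x1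
  proof -
    have "(\<integral>\<^sup>+x2. F (\<lambda>i\<in>I. a * (x1 i + x2 i) + p i) * G (\<lambda>i\<in>I. b * (x1 i - x2 i) + q i) \<partial>?L)
        = (\<integral>\<^sup>+x2. (\<lambda>w. F w * H x1 w) (\<lambda>i\<in>I. a * x2 i + (a * x1 i + p i)) \<partial>?L)"
    proof (intro nn_integral_cong)
      fix x2
      have "H x1 (\<lambda>i\<in>I. a * x2 i + (a * x1 i + p i)) = G (\<lambda>i\<in>I. b * (x1 i - x2 i) + q i)"
        unfolding H_def using assms(2) by (intro arg_cong[where f = G] restrict_ext) (simp add: field_simps)
      then show "F (\<lambda>i\<in>I. a * (x1 i + x2 i) + p i) * G (\<lambda>i\<in>I. b * (x1 i - x2 i) + q i)
          = (\<lambda>w. F w * H x1 w) (\<lambda>i\<in>I. a * x2 i + (a * x1 i + p i))"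
        by (simp add: algebra_simps)
    qed
    also have "\<dots> = ennreal ((1 / \<bar>a\<bar>) ^ card I) * (\<integral>\<^sup>+w. F w * H x1 w \<partial>?L)"
      by (intro nn_integral_PiM_lborel_affine assms(1,2)) (unfold H_def, measurable)
    finally show ?thesis .
  qed
  have outer: "(\<integral>\<^sup>+x1. H x1 w \<partial>?L) = ennreal ((1 / \<bar>2 * b\<bar>) ^ card I) * (\<integral>\<^sup>+x. G x \<partial>?L)" for w
    unfolding H_def using assms(3) by (intro nn_integral_PiM_lborel_affine assms(1)) auto
  have "(\<integral>\<^sup>+x1. \<integral>\<^sup>+x2. F (\<lambda>i\<in>I. a * (x1 i + x2 i) + p i) * G (\<lambda>i\<in>I. b * (x1 i - x2 i) + q i) \<partial>?L \<partial>?L)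
      = ennreal ((1 / \<bar>a\<bar>) ^ card I) * (\<integral>\<^sup>+x1. \<integral>\<^sup>+w. F w * H x1 w \<partial>?L \<partial>?L)"
  proof -
    have "(\<lambda>x1. \<integral>\<^sup>+w. F w * H x1 w \<partial>?L) \<in> borel_measurable ?L"
      by (rule sigma_finite_measure.borel_measurable_nn_integral[OF L_sigma_finite])
        measurable
    then show ?thesis
      by (simp add: inner nn_integral_cmult cong: nn_integral_cong)
  qed
  also have "(\<integral>\<^sup>+x1. \<integral>\<^sup>+w. F w * H x1 w \<partial>?L \<partial>?L) = (\<integral>\<^sup>+w. \<integral>\<^sup>+x1. F w * H x1 w \<partial>?L \<partial>?L)"
    by (rule Fubini') measurable
  also have "\<dots> = (\<integral>\<^sup>+w. F w * (\<integral>\<^sup>+x1. H x1 w \<partial>?L) \<partial>?L)"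
    by (intro nn_integral_cong nn_integral_cmult) measurable
  also have "\<dots> = (\<integral>\<^sup>+w. F w \<partial>?L) * ennreal ((1 / \<bar>2 * b\<bar>) ^ card I) * (\<integral>\<^sup>+x. G x \<partial>?L)"
    unfolding outer by (simp add: nn_integral_multc mult.assoc)
  also have "ennreal ((1 / \<bar>a\<bar>) ^ card I) * ((\<integral>\<^sup>+w. F w \<partial>?L) * ennreal ((1 / \<bar>2 * b\<bar>) ^ card I)
      * (\<integral>\<^sup>+x. G x \<partial>?L)) = ennreal ((1 / \<bar>a\<bar>) ^ card I * (1 / \<bar>2 * b\<bar>) ^ card I)
      * (\<integral>\<^sup>+w. F w \<partial>?L) * (\<integral>\<^sup>+x. G x \<partial>?L)"
    by (simp add: ennreal_mult mult_ac)
  also have "(1 / \<bar>a\<bar>) ^ card I * (1 / \<bar>2 * b\<bar>) ^ card I = (1 / (2 * \<bar>a * b\<bar>)) ^ card I"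
    unfolding power_mult_distrib[symmetric] by (simp add: abs_mult mult_ac)
  finally show ?thesis .
qed

lemma nn_integral_nn_integral_cmult:
  assumes "sigma_finite_measure N" "(\<lambda>(x, y). f x y) \<in> borel_measurable (M \<Otimes>\<^sub>M N)"
  shows "(\<integral>\<^sup>+x. \<integral>\<^sup>+y. a * f x y \<partial>N \<partial>M) = a * (\<integral>\<^sup>+x. \<integral>\<^sup>+y. f x y \<partial>N \<partial>M)"
proof -
  have "(\<lambda>x. \<integral>\<^sup>+y. f x y \<partial>N) \<in> borel_measurable M"
    using assms by (intro sigma_finite_measure.borel_measurable_nn_integral) auto
  then show ?thesis
    using assms(2) by (simp add: nn_integral_cmult measurable_Pair2 cong: nn_integral_cong)
qed

lemma prod_le_power_card:
  fixes g :: "'a \<Rightarrow> 'b :: linordered_semidom"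
  assumes "\<And>i. i \<in> S \<Longrightarrow> 0 \<le> g i" "\<And>i. i \<in> S \<Longrightarrow> g i \<le> B"
  shows "prod g S \<le> B ^ card S"
  using prod_mono[of S g "\<lambda>_. B"] assms by simp

lemma prod_le_mult_power_card:
  fixes g :: "'a \<Rightarrow> 'b :: linordered_semidom"
  assumes "finite S" "j \<in> S" "\<And>i. i \<in> S \<Longrightarrow> 0 \<le> g i" "\<And>i. i \<in> S \<Longrightarrow> g i \<le> B"
  shows "prod g S \<le> g j * B ^ (card S - 1)"
proof -
  have "prod g S = g j * prod g (S - {j})"
    using assms(1,2) by (simp add: prod.remove)
  also have "\<dots> \<le> g j * B ^ card (S - {j})"
    using assms by (intro mult_left_mono prod_le_power_card) auto
  finally show ?thesis
    using assms(1,2) by simp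
qed

lemma ex_dyadic_bracket:
  fixes t :: real
  assumes "1 \<le> t"
  shows "\<exists>k::nat. 2 powr real k \<le> t \<and> t < 2 powr (real k + 1)"
proof -
  define k where "k = nat \<lfloor>log 2 t\<rfloor>"
  have "real k = \<lfloor>log 2 t\<rfloor>"
    unfolding k_def using assms by simp
  then have k: "real k \<le> log 2 t" "log 2 t < real k + 1"
    by linarith+
  have "2 powr real k \<le> t"
    using k(1) assms by (simp add: le_log_iff)
  moreover have "t < 2 powr (real k + 1)"
    using k(2) assms by (simp add: log_less_iff)
  ultimately show ?thesis by blast
qed

lemma powr_le_dyadic_shell:
  assumes "0 < r" "r < N" "n \<ge> 1" "c \<ge> 0"
  shows "\<exists>k::nat. N \<le> r * 2 powr ((real k + 1) / real n)
           \<and> N powr (-2 * c * real n) \<le> r powr (-2 * c * real n) * 2 powr (-2 * c * real k)"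
proof -
  define t where "t = (N / r) powr real n"
  have "1 \<le> t"
    unfolding t_def using assms by (simp add: ge_one_powr_ge_zero)
  then obtain k :: nat where k: "2 powr real k \<le> t" "t < 2 powr (real k + 1)"
    using ex_dyadic_bracket by blast
  have N_eq: "N = r * t powr (1 / real n)"
    unfolding t_def using assms by (simp add: powr_powr)
  have "t powr (1 / real n) \<le> (2 powr (real k + 1)) powr (1 / real n)"
    using k(2) \<open>1 \<le> t\<close> by (intro powr_mono2) auto
  then have "N \<le> r * 2 powr ((real k + 1) / real n)"
    unfolding N_eq using assms(1) by (simp add: powr_powr)
  moreover have "N powr (-2 * c * real n) = r powr (-2 * c * real n) * t powr (-2 * c)"
    unfolding N_eq using assms \<open>1 \<le> t\<close> by (simp add: powr_mult powr_powr)
  moreover have "t powr (-2 * c) \<le> (2 powr real k) powr (-2 * c)"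
    using k(1) assms(4) by (intro powr_mono2') auto
  ultimately show ?thesis
    using assms(1) by (auto simp: powr_powr mult_ac intro: mult_left_mono)
qed

lemma two_powr_less_one: "(c :: real) > 1/2 \<Longrightarrow> 2 powr (1 - 2 * c) < 1"
  using powr_less_mono[of "1 - 2 * c" 0 2] by simp

lemma V_pos: "V n > 0"
  unfolding V_def by (intro divide_pos_pos) (auto intro: Gamma_real_pos)

lemma R_pos: "\<delta> > 0 \<Longrightarrow> R n \<delta> > 0"
  unfolding R_def using V_pos[of n] by simp

lemma V_mult_R_power:
  assumes "\<delta> > 0" "n \<ge> 1"
  shows "V n * R n \<delta> ^ n = \<delta>"
proof -
  have "R n \<delta> ^ n = ((\<delta> / V n) powr (1 / real n)) powr real n"
    unfolding R_def using assms V_pos[of n] by (simp add: powr_realpow)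
  also have "\<dots> = \<delta> / V n"
    using assms V_pos[of n] by (simp add: powr_powr)
  finally show ?thesis
    using V_pos[of n] by simp
qed

lemma V_powr_mult_R_powr_power:
  assumes "\<delta> > 0" "n \<ge> 1"
  shows "V n powr (- 2 * real l * c) * (R n \<delta> powr (-2 * c * real n)) ^ l = \<delta> powr (-2 * c * real l)"
proof -
  have "(R n \<delta> powr (-2 * c * real n)) ^ l = R n \<delta> powr (-2 * c * real n * real l)"
    using R_pos[OF assms(1), of n] by (simp add: powr_power mult_ac)
  also have "\<dots> = (\<delta> / V n) powr (-2 * c * real l)"
    unfolding R_def using assms V_pos[of n] by (simp add: powr_powr mult_ac)
  also have "\<dots> = \<delta> powr (-2 * c * real l) / V n powr (-2 * c * real l)"
    using assms(1) V_pos[of n] by (simp add: powr_divide)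
  finally show ?thesis
    using V_pos[of n] by (simp add: mult_ac)
qed

lemma borel_measurable_norm_n[measurable]:
  assumes [measurable]: "\<And>i. i < n \<Longrightarrow> (\<lambda>z. g z i) \<in> borel_measurable N"
  shows "(\<lambda>z. norm_n n (g z)) \<in> borel_measurable N"
  unfolding norm_n_def by measurable

lemma borel_measurable_f_cd[measurable]:
  assumes [measurable]: "\<And>i. i < n \<Longrightarrow> (\<lambda>z. g z i) \<in> borel_measurable N"
  shows "(\<lambda>z. f_cd n c \<delta> (g z)) \<in> borel_measurable N"
  unfolding f_cd_def by measurable

lemma f_cd_nonneg: "0 \<le> f_cd n c \<delta> x"
  unfolding f_cd_def by simp

lemma f_cd_le:
  assumes "c > 0" "\<delta> > 0" "n \<ge> 1"
  shows "f_cd n c \<delta> x \<le> R n \<delta> powr (-2 * c * real n)"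
  unfolding f_cd_def using assms R_pos[of \<delta> n] by (auto intro: powr_mono2')

lemma f_cd_cong: "(\<And>i. i < n \<Longrightarrow> x i = y i) \<Longrightarrow> f_cd n c \<delta> x = f_cd n c \<delta> y"
  unfolding f_cd_def norm_n_def by simp

lemma sigma_finite_lebesgue_n: "sigma_finite_measure (lebesgue_n n)"
proof -
  interpret finite_product_sigma_finite "\<lambda>_. lborel" "{..<n}"
    by standard auto
  show ?thesis
    unfolding lebesgue_n_def by (rule sigma_finite_measure_axioms)
qed

lemma emeasure_lebesgue_n_ball:
  assumes "r > 0"
  shows "emeasure (lebesgue_n n) ({x. norm_n n x \<le> r} \<inter> space (lebesgue_n n)) = ennreal (V n * r ^ n)"
  using emeasure_cball_aux[of "{..<n}" r] assms
  unfolding lebesgue_n_def norm_n_def V_def unit_ball_vol_def by simp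

lemma sets_lebesgue_n_ball: "{x. norm_n n x \<le> r} \<inter> space (lebesgue_n n) \<in> sets (lebesgue_n n)"
proof -
  have "{x \<in> space (lebesgue_n n). norm_n n x \<le> r} \<in> sets (lebesgue_n n)"
    unfolding lebesgue_n_def by measurable
  then show ?thesis
    by (simp add: Int_def conj_commute)
qed

lemma f_cd_le_shell_sum:
  assumes "c > 0" "\<delta> > 0" "n \<ge> 1"
  shows "ennreal (f_cd n c \<delta> x)
    \<le> (\<Sum>k. ennreal (R n \<delta> powr (-2 * c * real n) * 2 powr (-2 * c * real k))
             * indicator {x. norm_n n x \<le> R n \<delta> * 2 powr ((real k + 1) / real n)} x)"
    (is "_ \<le> (\<Sum>k. ?term k)")
proof (cases "norm_n n x > R n \<delta>")
  case True
  then obtain k :: nat where "norm_n n x \<le> R n \<delta> * 2 powr ((real k + 1) / real n)"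
    and "norm_n n x powr (-2 * c * real n) \<le> R n \<delta> powr (-2 * c * real n) * 2 powr (-2 * c * real k)"
    using powr_le_dyadic_shell[of "R n \<delta>" "norm_n n x" n c] assms R_pos by auto
  then have "ennreal (f_cd n c \<delta> x) \<le> ?term k"
    using True unfolding f_cd_def by simp
  also have "?term k \<le> (\<Sum>k. ?term k)"
    using sum_le_suminf[of ?term "{k}"] by (simp only: summableI finite.intros sum.insert_if sum.empty) simp
  finally show ?thesis .
qed (simp add: f_cd_def)

lemma emeasure_dyadic_ball_weighted:
  assumes "\<delta> > 0" "n \<ge> 1"
  shows "ennreal (R n \<delta> powr (-2 * c * real n) * 2 powr (-2 * c * real k))
      * emeasure (lebesgue_n n) ({x. norm_n n x \<le> R n \<delta> * 2 powr ((real k + 1) / real n)} \<inter> space (lebesgue_n n))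
    = ennreal (2 * \<delta> * R n \<delta> powr (-2 * c * real n) * (2 powr (1 - 2 * c)) ^ k)"
proof -
  have "V n * (R n \<delta> * 2 powr ((real k + 1) / real n)) ^ n = \<delta> * 2 powr (real k + 1)"
    using V_mult_R_power[OF assms] assms(2)
    by (simp add: power_mult_distrib powr_realpow[symmetric] powr_powr)
  then have measure: "emeasure (lebesgue_n n)
      ({x. norm_n n x \<le> R n \<delta> * 2 powr ((real k + 1) / real n)} \<inter> space (lebesgue_n n))
    = ennreal (\<delta> * 2 powr (real k + 1))"
    using R_pos[OF assms(1)] by (simp add: emeasure_lebesgue_n_ball)
  have "2 powr (-2 * c * real k) * 2 powr (real k + 1) = 2 powr (1 + (1 - 2 * c) * real k)"
    by (simp add: powr_add[symmetric] algebra_simps)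
  also have "\<dots> = 2 * (2 powr (1 - 2 * c)) ^ k"
    by (simp add: powr_realpow[symmetric] powr_powr powr_add)
  finally have dyadic: "2 powr (-2 * c * real k) * 2 powr (real k + 1) = 2 * (2 powr (1 - 2 * c)) ^ k" .
  have "R n \<delta> powr (-2 * c * real n) * 2 powr (-2 * c * real k) * (\<delta> * 2 powr (real k + 1))
      = \<delta> * R n \<delta> powr (-2 * c * real n) * (2 powr (-2 * c * real k) * 2 powr (real k + 1))"
    by (simp only: mult_ac)
  also have "\<dots> = 2 * \<delta> * R n \<delta> powr (-2 * c * real n) * (2 powr (1 - 2 * c)) ^ k"
    unfolding dyadic by (simp only: mult_ac)
  finally show ?thesis
    unfolding measure using assms(1) by (simp flip: ennreal_mult)
qed

lemma nn_integral_f_cd_le: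
  assumes "c > 1/2" "\<delta> > 0" "n \<ge> 1"
  shows "(\<integral>\<^sup>+x. ennreal (f_cd n c \<delta> x) \<partial>lebesgue_n n)
      \<le> ennreal (2 * \<delta> / (1 - 2 powr (1 - 2 * c)) * R n \<delta> powr (-2 * c * real n))"
proof -
  define B where "B = R n \<delta> powr (-2 * c * real n)"
  define q :: real where "q = 2 powr (1 - 2 * c)"
  define S where "S k = {x. norm_n n x \<le> R n \<delta> * 2 powr ((real k + 1) / real n)} \<inter> space (lebesgue_n n)"
    for k :: nat
  have q: "0 < q" "q < 1"
    unfolding q_def using two_powr_less_one[OF assms(1)] by auto
  have shell: "ennreal (B * 2 powr (-2 * c * real k)) * emeasure (lebesgue_n n) (S k)
      = ennreal (2 * \<delta> * B * q ^ k)" for k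
    unfolding B_def S_def q_def by (rule emeasure_dyadic_ball_weighted[OF assms(2,3)])
  have "(\<integral>\<^sup>+x. ennreal (f_cd n c \<delta> x) \<partial>lebesgue_n n)
      \<le> (\<integral>\<^sup>+x. (\<Sum>k. ennreal (B * 2 powr (-2 * c * real k)) * indicator (S k) x) \<partial>lebesgue_n n)"
    using f_cd_le_shell_sum[of c \<delta> n] assms
    by (intro nn_integral_mono) (simp add: B_def S_def indicator_inter_arith)
  also have "\<dots> = (\<Sum>k. ennreal (B * 2 powr (-2 * c * real k)) * emeasure (lebesgue_n n) (S k))"
    using sets_lebesgue_n_ball unfolding S_def by (simp add: nn_integral_suminf nn_integral_cmult_indicator)
  also have "\<dots> = (\<Sum>k. ennreal (2 * \<delta> * B * q ^ k))"
    by (simp only: shell)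
  also have "\<dots> = ennreal (2 * \<delta> * B / (1 - q))"
    using assms(2) q sums_mult[OF geometric_sums[of q], of "2 * \<delta> * B"]
    by (intro suminf_ennreal_eq) (auto simp: B_def divide_simps)
  finally show ?thesis
    unfolding B_def q_def by (simp add: mult_ac)
qed

lemma nn_integral_f_cd_sum_diff:
  assumes "a \<noteq> 0" "b \<noteq> 0"
  shows "(\<integral>\<^sup>+x1. \<integral>\<^sup>+x2. ennreal (f_cd n c \<delta> (vadd (vscale a (vadd x1 x2)) p)
                         * f_cd n c \<delta> (vadd (vscale b (vsub x1 x2)) q)) \<partial>lebesgue_n n \<partial>lebesgue_n n)
    = ennreal ((1 / (2 * \<bar>a * b\<bar>)) ^ n) * (\<integral>\<^sup>+x. ennreal (f_cd n c \<delta> x) \<partial>lebesgue_n n)\<^sup>2"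
proof -
  let ?F = "\<lambda>x. ennreal (f_cd n c \<delta> x)"
  have F_measurable: "?F \<in> borel_measurable (PiM {..<n} (\<lambda>_. lborel))"
    by measurable
  have "ennreal (f_cd n c \<delta> (vadd (vscale a (vadd x1 x2)) p) * f_cd n c \<delta> (vadd (vscale b (vsub x1 x2)) q))
      = ?F (\<lambda>i\<in>{..<n}. a * (x1 i + x2 i) + p i) * ?F (\<lambda>i\<in>{..<n}. b * (x1 i - x2 i) + q i)" for x1 x2
    by (simp add: f_cd_nonneg vadd_def vscale_def vsub_def flip: ennreal_mult cong: f_cd_cong)
  then show ?thesis
    unfolding lebesgue_n_def
    using nn_integral_PiM_lborel_sum_diff[of "{..<n}" a b ?F ?F p q, OF _ assms F_measurable F_measurable]
    by (simp add: power2_eq_square mult.assoc)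
qed

lemma I_y_integrand_le:
  fixes f :: "(nat \<Rightarrow> real) \<Rightarrow> real"
  assumes f_nonneg: "\<And>x. 0 \<le> f x" and f_le: "\<And>x. f x \<le> B"
    and "l1 > 0" "l2 > 0" "l3 > 0" "l4 > 0" "l1 + l2 + l3 + l4 = l"
  shows "f x1 * (\<Prod>i\<in>{1..l1 - 1}. f (vadd (vscale (\<epsilon> i) x1) (y i)))
        * f x2 * (\<Prod>i\<in>{l1..l1 + l2 - 2}. f (vadd (vscale (\<epsilon> i) x2) (y i)))
        * (\<Prod>i\<in>{l1 + l2 - 1..l1 + l2 + l3 - 2}. f (vadd (vscale (\<epsilon> i) (vadd x1 x2)) (y i)))
        * (\<Prod>i\<in>{l1 + l2 + l3 - 1..l - 2}. f (vadd (vscale (\<epsilon> i) (vsub x1 x2)) (y i)))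
    \<le> B ^ (l - 2)
        * (f (vadd (vscale (\<epsilon> (l1 + l2 - 1)) (vadd x1 x2)) (y (l1 + l2 - 1)))
           * f (vadd (vscale (\<epsilon> (l1 + l2 + l3 - 1)) (vsub x1 x2)) (y (l1 + l2 + l3 - 1))))"
    (is "f x1 * ?P1 * f x2 * ?P2 * ?P3 * ?P4 \<le> _ * (?t3 * ?t4)")
proof -
  have "0 \<le> B"
    using f_nonneg f_le order_trans by blast
  have "?P1 \<le> B ^ card {1..l1 - 1}" "?P2 \<le> B ^ card {l1..l1 + l2 - 2}"
    using f_nonneg f_le by (intro prod_le_power_card; simp)+
  then have P12: "?P1 \<le> B ^ (l1 - 1)" "?P2 \<le> B ^ (l2 - 1)"
    using assms(3,4) by simp_all
  have "?P3 \<le> ?t3 * B ^ (card {l1 + l2 - 1..l1 + l2 + l3 - 2} - 1)"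
    using f_nonneg f_le assms(3-5) by (intro prod_le_mult_power_card) auto
  then have P3: "?P3 \<le> ?t3 * B ^ (l3 - 1)"
    using assms(3-5) by simp
  have "?P4 \<le> ?t4 * B ^ (card {l1 + l2 + l3 - 1..l - 2} - 1)"
    using f_nonneg f_le assms(3-7) by (intro prod_le_mult_power_card) auto
  moreover have "card {l1 + l2 + l3 - 1..l - 2} - 1 = l4 - 1"
    using assms(3-7) by simp
  ultimately have P4: "?P4 \<le> ?t4 * B ^ (l4 - 1)"
    by simp
  have "f x1 * ?P1 * f x2 * ?P2 * ?P3 * ?P4
      \<le> B * B ^ (l1 - 1) * B * B ^ (l2 - 1) * (?t3 * B ^ (l3 - 1)) * (?t4 * B ^ (l4 - 1))"
    by (intro mult_mono P12 P3 P4 f_le) (auto simp: f_nonneg \<open>0 \<le> B\<close> intro!: prod_nonneg)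
  also have "\<dots> = B ^ (1 + (l1 - 1) + 1 + (l2 - 1) + (l3 - 1) + (l4 - 1)) * (?t3 * ?t4)"
    by (simp add: power_add mult_ac)
  also have "1 + (l1 - 1) + 1 + (l2 - 1) + (l3 - 1) + (l4 - 1) = l - 2"
    using assms(3-7) by simp
  finally show ?thesis .
qed

lemma nn_integral_f_cd_sum_diff_le:
  assumes "c > 1/2" "\<delta> > 0" "n \<ge> 1" "\<bar>a\<bar> = 1" "\<bar>b\<bar> = 1"
  shows "(\<integral>\<^sup>+x1. \<integral>\<^sup>+x2. ennreal (f_cd n c \<delta> (vadd (vscale a (vadd x1 x2)) p)
                         * f_cd n c \<delta> (vadd (vscale b (vsub x1 x2)) q)) \<partial>lebesgue_n n \<partial>lebesgue_n n)
    \<le> ennreal ((1/2) ^ n * (2 * \<delta> / (1 - 2 powr (1 - 2 * c)) * R n \<delta> powr (-2 * c * real n))\<^sup>2)"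
proof -
  have "0 \<le> 2 * \<delta> / (1 - 2 powr (1 - 2 * c)) * R n \<delta> powr (-2 * c * real n)"
    using assms(2) two_powr_less_one[OF assms(1)] by simp
  moreover have "(\<integral>\<^sup>+x. ennreal (f_cd n c \<delta> x) \<partial>lebesgue_n n)\<^sup>2
      \<le> (ennreal (2 * \<delta> / (1 - 2 powr (1 - 2 * c)) * R n \<delta> powr (-2 * c * real n)))\<^sup>2"
    using nn_integral_f_cd_le[OF assms(1-3)] by (rule power_mono) simp
  ultimately show ?thesis
    using assms(4,5) by (simp add: nn_integral_f_cd_sum_diff abs_mult ennreal_mult ennreal_power mult_left_mono)
qed

lemma I_y_le:
  assumes c: "c > 1/2" and \<delta>: "\<delta> > 0" and n: "n \<ge> 1"
    and l: "l1 > 0" "l2 > 0" "l3 > 0" "l4 > 0" "l1 + l2 + l3 + l4 = l"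
    and \<epsilon>: "\<forall>i\<in>{1..l - 2}. \<epsilon> i = 1 \<or> \<epsilon> i = -1"
  shows "I_y n c \<delta> l l1 l2 l3 l4 \<epsilon> y
    \<le> ennreal (\<delta> powr (-2 * c * real l) * (2 * \<delta> / (1 - 2 powr (1 - 2 * c)))\<^sup>2 * (1/2) ^ n)"
proof -
  define f where "f = f_cd n c \<delta>"
  define B where "B = R n \<delta> powr (-2 * c * real n)"
  define D where "D = 2 * \<delta> / (1 - 2 powr (1 - 2 * c))"
  define i3 where "i3 = l1 + l2 - 1"
  define i4 where "i4 = l1 + l2 + l3 - 1"
  define T where "T x1 x2 = f (vadd (vscale (\<epsilon> i3) (vadd x1 x2)) (y i3))
    * f (vadd (vscale (\<epsilon> i4) (vsub x1 x2)) (y i4))" for x1 x2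
  have f_nonneg: "0 \<le> f x" for x
    unfolding f_def by (rule f_cd_nonneg)
  have f_le: "f x \<le> B" for x
    unfolding f_def B_def using c \<delta> n by (intro f_cd_le) auto
  have "0 \<le> B"
    using f_nonneg f_le order_trans by blast
  have "i3 \<in> {1..l - 2}" "i4 \<in> {1..l - 2}"
    using l unfolding i3_def i4_def by auto
  then have T_integral: "(\<integral>\<^sup>+x1. \<integral>\<^sup>+x2. ennreal (T x1 x2) \<partial>lebesgue_n n \<partial>lebesgue_n n)
      \<le> ennreal ((1/2) ^ n * (D * B)\<^sup>2)"
    unfolding T_def f_def D_def B_def using \<epsilon> by (intro nn_integral_f_cd_sum_diff_le c \<delta> n) force+
  have T_measurable: "(\<lambda>(x1, x2). ennreal (T x1 x2)) \<in> borel_measurable (lebesgue_n n \<Otimes>\<^sub>M lebesgue_n n)"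
    unfolding T_def f_def lebesgue_n_def vadd_def vscale_def vsub_def by measurable
  have "I_y n c \<delta> l l1 l2 l3 l4 \<epsilon> y
      \<le> ennreal (V n powr (- 2 * real l * c))
         * (\<integral>\<^sup>+x1. \<integral>\<^sup>+x2. ennreal (B ^ (l - 2)) * ennreal (T x1 x2) \<partial>lebesgue_n n \<partial>lebesgue_n n)"
    unfolding I_y_def f_def[symmetric] T_def i3_def i4_def
    using I_y_integrand_le[where f = f, OF f_nonneg f_le l] f_nonneg \<open>0 \<le> B\<close>
    by (intro mult_left_mono nn_integral_mono) (simp_all flip: ennreal_mult)
  also have "\<dots> = ennreal (V n powr (- 2 * real l * c)) * ennreal (B ^ (l - 2))
      * (\<integral>\<^sup>+x1. \<integral>\<^sup>+x2. ennreal (T x1 x2) \<partial>lebesgue_n n \<partial>lebesgue_n n)"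
    by (simp add: nn_integral_nn_integral_cmult[OF sigma_finite_lebesgue_n T_measurable] mult.assoc)
  also have "\<dots> \<le> ennreal (V n powr (- 2 * real l * c) * B ^ (l - 2) * ((1/2) ^ n * (D * B)\<^sup>2))"
    by (rule order_trans[OF mult_left_mono[OF T_integral]]) (simp_all add: \<open>0 \<le> B\<close> flip: ennreal_mult)
  also have "V n powr (- 2 * real l * c) * B ^ (l - 2) * ((1/2) ^ n * (D * B)\<^sup>2)
      = V n powr (- 2 * real l * c) * B ^ (l - 2 + 2) * D\<^sup>2 * (1/2) ^ n"
    by (simp add: power_add power_mult_distrib power2_eq_square mult_ac)
  also have "l - 2 + 2 = l"
    using l by simp
  also have "V n powr (- 2 * real l * c) * B ^ l = \<delta> powr (-2 * c * real l)"
    unfolding B_def by (rule V_powr_mult_R_powr_power[OF \<delta> n])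
  finally show ?thesis
    unfolding D_def .
qed

theorem theorem5p4:
  fixes c \<delta> :: real and l :: nat
  assumes "c > 1/2" and "\<delta> > 0" and "l \<ge> 4"
  shows "\<exists>K \<rho> :: real. K > 0 \<and> 0 < \<rho> \<and> \<rho> < 1 \<and>
    (\<forall>l1 l2 l3 l4 :: nat. \<forall>n :: nat. \<forall>\<epsilon> :: nat \<Rightarrow> real. \<forall>y :: nat \<Rightarrow> nat \<Rightarrow> real.
       l1 > 0 \<longrightarrow> l2 > 0 \<longrightarrow> l3 > 0 \<longrightarrow> l4 > 0 \<longrightarrow> l1 + l2 + l3 + l4 = l \<longrightarrow>
       n \<ge> 1 \<longrightarrow> (\<forall>i\<in>{1..l - 2}. \<epsilon> i = 1 \<or> \<epsilon> i = -1) \<longrightarrow>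
       I_y n c \<delta> l l1 l2 l3 l4 \<epsilon> y \<le> ennreal (K * \<rho> ^ n))"
proof -
  define K where "K = \<delta> powr (-2 * c * real l) * (2 * \<delta> / (1 - 2 powr (1 - 2 * c)))\<^sup>2"
  have "2 * \<delta> / (1 - 2 powr (1 - 2 * c)) > 0"
    using assms(2) two_powr_less_one[OF assms(1)] by simp
  then have "K > 0"
    unfolding K_def using assms(2) by (intro mult_pos_pos) auto
  \<comment> \<open>the hypothesis \<open>l \<ge> 4\<close> is implied by \<open>l1, l2, l3, l4 > 0\<close>\<close>
  then show ?thesis
    using I_y_le[OF assms(1,2)] unfolding K_def
    by (intro exI[of _ K] exI[of _ "1/2"]) (auto simp: K_def)
qed

end
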